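(* The following identities hold: \begin{align*}\sum_{k=1}^\infty\frac{5929k^2-4675k+914}{k(-2)^k\binom{4k}k}&=-189-30\log2, \\\sum_{k=1}^\infty\frac{39083k^2-31627k+5624}{k(-24)^k\binom{4k}k}&=40\log\frac23-117, \\\sum_{k=1}^\infty\frac{475397k^2-335665k+55072}{k(-192)^k\binom{4k}k}&=160\log\frac34-207. \end{align*} *)

theory Defs
  imports Complex_Main
begin

end

theory Submission
  imports Defs "HOL-Analysis.Analysis" "HOL-Computational_Algebra.Polynomial"
begin

(* Since 1 / (k C(4k,k)) = B(k, 3k+1) = \<integral>\<^sub>0\<^sup>1 t^(k-1) (1-t)^(3k) dt, each series is
   handled by a WZ-style certificate: its k-th term equals G(k) - G(k+1) + c l(k), where
   G(k) = p(k) B(k, 3k+1) / x^k for a quadratic p, and l(k) = \<integral>\<^sub>0\<^sup>1 q(t) (t(1-t)^3)^k dt / x^(k+1)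
   for the cubic q with x - t(1-t)^3 = (r - t) q(t).  The G-part telescopes, and summing the
   geometric series under the integral gives \<Sum> l(k) = \<integral>\<^sub>0\<^sup>1 dt / (r - t) = ln (r / (r - 1)).
   The three identities are the cases (x, r) = (-2, 2), (-24, 3), (-192, -3). *)

lemma has_integral_Beta_nat:
  "((\<lambda>t::real. t ^ m * (1 - t) ^ n) has_integral Beta (real m + 1) (real n + 1)) {0..1}"
proof (rule has_integral_spike_finite[of "{0, 1}"])
  show "((\<lambda>t. t powr (real m + 1 - 1) * (1 - t) powr (real n + 1 - 1))
          has_integral Beta (real m + 1) (real n + 1)) {0..1}"
    by (rule has_integral_Beta_real) auto
  show "t ^ m * (1 - t) ^ n = t powr (real m + 1 - 1) * (1 - t) powr (real n + 1 - 1)"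
    if "t \<in> {0..1} - {0, 1}" for t
    using that by (simp add: powr_realpow)
qed simp

lemma Beta_of_nat_eq_inverse_binomial:
  assumes "m > 0"
  shows "Beta (real m) (real n + 1) = 1 / (real m * real ((m + n) choose m))"
proof -
  have "Gamma (real m) = fact (m - 1)"
    using Gamma_fact[of "m - 1", where 'a = real] assms by (simp add: of_nat_diff)
  moreover have "fact m = real m * fact (m - 1)"
    using assms fact_num_eq_if[of m] by (simp add: of_nat_diff)
  ultimately show ?thesis
    using assms Gamma_fact[of n, where 'a = real] Gamma_fact[of "m + n", where 'a = real]
    by (simp add: Beta_def binomial_fact add_ac)
qed

lemma abs_Beta_of_nat_le_1: "\<bar>Beta (real m) (real n + 1)\<bar> \<le> 1"
proof (cases "m = 0")
  case False
  then have "1 \<le> real m" "1 \<le> real ((m + n) choose m)"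
    by (simp_all add: Suc_le_eq zero_less_binomial_iff)
  then have "1 \<le> real m * real ((m + n) choose m)"
    using mult_mono[of 1 "real m" 1] by simp
  then show ?thesis
    using False Beta_of_nat_eq_inverse_binomial[of m n] by simp
qed (simp add: Beta_pole1)

lemma Beta_add_of_nat_left:
  fixes a b :: real
  assumes "a > 0" "b > 0"
  shows "Beta (a + of_nat n) b = pochhammer a n / pochhammer (a + b) n * Beta a b"
proof (induction n)
  case (Suc n)
  have "a + of_nat n \<notin> \<int>\<^sub>\<le>\<^sub>0" using assms by (auto elim!: nonpos_Ints_cases)
  from Beta_plus1_left[OF this, of b]
  have "Beta (a + of_nat n + 1) b = (a + of_nat n) / (a + b + of_nat n) * Beta (a + of_nat n) b"
    using assms by (simp add: field_simps add_pos_nonneg)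
  then show ?case
    using Suc.IH by (simp add: pochhammer_Suc add_ac mult_ac)
qed simp

lemma Beta_add_of_nat_right:
  fixes a b :: real
  assumes "a > 0" "b > 0"
  shows "Beta a (b + of_nat n) = pochhammer b n / pochhammer (a + b) n * Beta a b"
  using Beta_add_of_nat_left[OF assms(2,1)] by (simp add: Beta_commute add.commute)

lemma Beta_next_ratio:
  fixes K :: real
  assumes "K > 0"
  shows "Beta (K + 1) (3*K + 4) =
    K * pochhammer (3*K + 1) 3 / pochhammer (4*K + 1) 4 * Beta K (3*K + 1)"
proof -
  have "Beta (K + 1) (3*K + 1 + of_nat 3) =
      pochhammer (3*K + 1) 3 / pochhammer (4*K + 2) 3 * Beta (K + 1) (3*K + 1)"
    using Beta_add_of_nat_right[of "K + 1" "3*K + 1" 3] assms by (simp add: add_ac)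
  moreover have "Beta (K + of_nat 1) (3*K + 1) = K / (4*K + 1) * Beta K (3*K + 1)"
    using Beta_add_of_nat_left[of K "3*K + 1" 1] assms by (simp add: add_ac)
  moreover have "pochhammer (4*K + 1) 4 = (4*K + 1) * pochhammer (4*K + 2) 3"
    by (simp add: pochhammer_rec numeral_eq_Suc add_ac)
  ultimately show ?thesis
    using assms by (simp add: algebra_simps)
qed

lemma Beta_moment_ratio:
  fixes K :: real
  assumes "K > 0" "j \<le> 3"
  shows "Beta (K + of_nat j + 1) (3*K + 1) =
    pochhammer K (j + 1) * pochhammer (4*K + of_nat j + 2) (3 - j) / pochhammer (4*K + 1) 4
    * Beta K (3*K + 1)"
proof -
  have "pochhammer (4*K + 1) 4 = pochhammer (4*K + 1) (j + 1) * pochhammer (4*K + of_nat j + 2) (3 - j)"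
    using pochhammer_product[of "j + 1" 4 "4*K + 1"] assms(2) by (simp add: add_ac)
  moreover have "pochhammer (4*K + 1) (j + 1) > 0" "pochhammer (4*K + of_nat j + 2) (3 - j) > 0"
    using assms(1) by (intro pochhammer_pos; simp add: add_pos_nonneg)+
  ultimately show ?thesis
    using Beta_add_of_nat_left[of K "3*K + 1" "j + 1"] assms(1) by (simp add: add_ac)
qed

lemma has_integral_poly_Beta_kernel:
  fixes q :: "real poly"
  assumes "degree q \<le> d"
  shows "((\<lambda>t. poly q t * (t ^ m * (1 - t) ^ n)) has_integral
           (\<Sum>j\<le>d. coeff q j * Beta (real (m + j) + 1) (real n + 1))) {0..1}"
proof -
  have "poly q t * (t ^ m * (1 - t) ^ n) = (\<Sum>j\<le>d. coeff q j * (t ^ (m + j) * (1 - t) ^ n))" for t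
  proof -
    have "poly q t = (\<Sum>j\<le>d. coeff q j * t ^ j)"
      by (subst poly_as_sum_of_monoms'[OF assms, symmetric]) (simp add: poly_sum poly_monom)
    then show ?thesis by (simp add: sum_distrib_left power_add mult_ac)
  qed
  then show ?thesis
    by (simp only:) (intro has_integral_sum finite_atMost has_integral_mult_right has_integral_Beta_nat)
qed

lemma summand_decomposition:
  fixes x c :: real and P :: "real \<Rightarrow> real" and p q :: "real poly" and k :: nat
  defines "K \<equiv> real k"
  assumes "x \<noteq> 0" "k > 0"
    and certificate: "x * pochhammer (4*K + 1) 4 * (P K - poly p K) =
      c * (\<Sum>j\<le>3. coeff q j * pochhammer K (j + 1) * pochhammer (4*K + of_nat j + 2) (3 - j))
      - poly p (K + 1) * K * pochhammer (3*K + 1) 3"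
  shows "P K / (K * x ^ k * real ((4*k) choose k)) =
         poly p K * Beta K (real (3*k) + 1) / x ^ k
       - poly p (real (k + 1)) * Beta (real (k + 1)) (real (3*(k + 1)) + 1) / x ^ (k + 1)
       + c * (\<Sum>j\<le>3. coeff q j * Beta (real (k + j) + 1) (real (3*k) + 1)) / x ^ (k + 1)"
proof -
  define \<beta> where "\<beta> = Beta K (real (3*k) + 1)"
  define D where "D = pochhammer (4*K + 1) 4"
  define S where "S = (\<Sum>j\<le>3. coeff q j * pochhammer K (j + 1) * pochhammer (4*K + of_nat j + 2) (3 - j))"
  have "K > 0" using \<open>k > 0\<close> by (simp add: K_def)
  have "D > 0" unfolding D_def using \<open>K > 0\<close> by (intro pochhammer_pos) simp
  have lhs: "P K / (K * x ^ k * real ((4*k) choose k)) = P K * \<beta> / x ^ k"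
    using Beta_of_nat_eq_inverse_binomial[OF \<open>k > 0\<close>, of "3*k"] by (simp add: \<beta>_def K_def)
  have next_term: "Beta (real (k + 1)) (real (3*(k + 1)) + 1) = K * pochhammer (3*K + 1) 3 / D * \<beta>"
    using Beta_next_ratio[OF \<open>K > 0\<close>] by (simp add: \<beta>_def D_def K_def add_ac)
  have moments: "(\<Sum>j\<le>3. coeff q j * Beta (real (k + j) + 1) (real (3*k) + 1)) = S / D * \<beta>"
    unfolding S_def sum_divide_distrib sum_distrib_right
    using Beta_moment_ratio[OF \<open>K > 0\<close>] by (intro sum.cong) (auto simp: \<beta>_def D_def K_def add_ac)
  have P_eq: "P K = poly p K + (c * S - poly p (K + 1) * K * pochhammer (3*K + 1) 3) / (x * D)"
    using certificate \<open>x \<noteq> 0\<close> \<open>D > 0\<close> unfolding D_def[symmetric] S_def[symmetric]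
    by (simp add: field_simps)
  show ?thesis
    unfolding lhs next_term moments \<beta>_def[symmetric] unfolding P_eq
    using \<open>x \<noteq> 0\<close> \<open>D > 0\<close> by (simp add: K_def field_simps)
qed

lemma power_div_power_tendsto_zero:
  fixes c :: real
  assumes "1 < c"
  shows "(\<lambda>n. real n ^ i / c ^ n) \<longlonglongrightarrow> 0"
proof -
  define L where "L = ln c"
  have "L > 0" using assms by (simp add: L_def)
  have "filterlim (\<lambda>n. L * real n) at_top sequentially"
    by (rule filterlim_tendsto_pos_mult_at_top[OF tendsto_const \<open>L > 0\<close> filterlim_real_sequentially])
  from filterlim_compose[OF tendsto_power_div_exp_0 this, of i]
  have "(\<lambda>n. (L * real n) ^ i / exp (L * real n) / L ^ i) \<longlonglongrightarrow> 0"
    by (intro tendsto_divide_zero)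
  moreover have "(L * real n) ^ i / exp (L * real n) / L ^ i = real n ^ i / c ^ n" for n
    using \<open>L > 0\<close> assms
    by (simp add: L_def power_mult_distrib exp_of_nat_mult mult.commute)
  ultimately show ?thesis by simp
qed

lemma has_integral_inverse_sub:
  fixes r :: real
  assumes "r \<notin> {0..1}"
  shows "((\<lambda>t. 1 / (r - t)) has_integral ln (r / (r - 1))) {0..1}"
proof -
  have "((\<lambda>t. 1 / (r - t)) has_integral
          (- ln ((r - 1) / (r - 1))) - (- ln ((r - 0) / (r - 1)))) {0..1}"
  proof (rule fundamental_theorem_of_calculus)
    fix t :: real assume "t \<in> {0..1}"
    then have "(r - t) / (r - 1) > 0" "r - t \<noteq> 0" "r - 1 \<noteq> 0"
      using assms by (auto simp: divide_pos_pos divide_neg_neg)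
    have "((\<lambda>t. (r - t) / (r - 1)) has_real_derivative - 1 / (r - 1)) (at t)"
      by (rule DERIV_cdivide) (auto intro!: derivative_eq_intros)
    from DERIV_minus[OF DERIV_chain2[OF DERIV_ln[OF \<open>(r - t) / (r - 1) > 0\<close>] this]]
    have "((\<lambda>t. - ln ((r - t) / (r - 1))) has_real_derivative 1 / (r - t)) (at t)"
      using \<open>r - t \<noteq> 0\<close> \<open>r - 1 \<noteq> 0\<close> by (simp add: field_simps)
    then show "((\<lambda>t. - ln ((r - t) / (r - 1))) has_vector_derivative 1 / (r - t)) (at t within {0..1})"
      by (simp add: has_real_derivative_iff_has_vector_derivative[symmetric] has_field_derivative_at_within)
  qed simp
  moreover have "r \<noteq> 1" using assms by auto
  ultimately show ?thesis by simp
qed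

lemma sums_integral_geometric:
  fixes f w :: "real \<Rightarrow> real"
  assumes f: "continuous_on {a..b} f" and w: "continuous_on {a..b} w"
    and bound: "\<And>t. t \<in> {a..b} \<Longrightarrow> \<bar>w t\<bar> \<le> \<theta>" and "\<theta> < 1"
  shows "(\<lambda>k. integral {a..b} (\<lambda>t. f t * w t ^ k)) sums integral {a..b} (\<lambda>t. f t / (1 - w t))"
proof -
  obtain B where B: "\<forall>t\<in>{a..b}. \<bar>f t\<bar> \<le> B"
    using compact_imp_bounded[OF compact_continuous_image[OF f compact_Icc]]
    by (auto simp: bounded_iff)
  define \<theta>' where "\<theta>' = max 0 \<theta>"
  have "0 \<le> \<theta>'" "\<theta>' < 1" using \<open>\<theta> < 1\<close> by (auto simp: \<theta>'_def)
  have "norm (f t * w t ^ k) \<le> B * \<theta>' ^ k" if "t \<in> {a..b}" for t k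
  proof -
    have "\<bar>f t\<bar> \<le> B" "\<bar>w t\<bar> \<le> \<theta>'" using B that bound[OF that] by (auto simp: \<theta>'_def)
    moreover from this(1) have "0 \<le> B" by linarith
    ultimately show ?thesis
      unfolding real_norm_def abs_mult power_abs by (intro mult_mono power_mono) auto
  qed
  moreover have "summable (\<lambda>k. B * \<theta>' ^ k)"
    using \<open>0 \<le> \<theta>'\<close> \<open>\<theta>' < 1\<close> by (intro summable_mult summable_geometric) simp
  ultimately have "uniform_limit {a..b} (\<lambda>n t. \<Sum>k<n. f t * w t ^ k) (\<lambda>t. \<Sum>k. f t * w t ^ k)
      sequentially"
    by (rule Weierstrass_m_test)
  then obtain I J where I: "\<And>n. ((\<lambda>t. \<Sum>k<n. f t * w t ^ k) has_integral I n) {a..b}"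
    and J: "((\<lambda>t. \<Sum>k. f t * w t ^ k) has_integral J) {a..b}" and "I \<longlonglongrightarrow> J"
    by (rule uniform_limit_integral) (use f w in \<open>auto intro!: continuous_intros\<close>)
  have "((\<lambda>t. f t * w t ^ k) has_integral integral {a..b} (\<lambda>t. f t * w t ^ k)) {a..b}" for k
    using f w by (intro integrable_integral integrable_continuous_interval continuous_intros)
  then have "((\<lambda>t. \<Sum>k<n. f t * w t ^ k) has_integral
      (\<Sum>k<n. integral {a..b} (\<lambda>t. f t * w t ^ k))) {a..b}" for n
    by (intro has_integral_sum) auto
  then have "I = (\<lambda>n. \<Sum>k<n. integral {a..b} (\<lambda>t. f t * w t ^ k))"
    using I by (intro ext) (blast intro: has_integral_unique)
  moreover have "((\<lambda>t. f t / (1 - w t)) has_integral J) {a..b}"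
  proof (rule has_integral_cong[THEN iffD1, OF _ J])
    show "(\<Sum>k. f t * w t ^ k) = f t / (1 - w t)" if "t \<in> {a..b}" for t
      using bound[OF that] \<open>\<theta> < 1\<close> by (simp add: suminf_mult suminf_geometric divide_inverse)
  qed
  ultimately show ?thesis
    using \<open>I \<longlonglongrightarrow> J\<close> by (simp add: sums_def integral_unique)
qed

lemma poly_div_power_tendsto_zero:
  fixes p :: "real poly"
  assumes "1 < \<bar>x\<bar>"
  shows "(\<lambda>n. poly p (real n) / x ^ n) \<longlonglongrightarrow> 0"
proof -
  have "(\<lambda>n. real n ^ i / x ^ n) \<longlonglongrightarrow> 0" for i
    by (rule tendsto_norm_zero_cancel)
      (use power_div_power_tendsto_zero[OF assms, of i] in \<open>simp add: power_abs\<close>)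
  then have "(\<lambda>n. coeff p i * (real n ^ i / x ^ n)) \<longlonglongrightarrow> 0" for i
    by (rule tendsto_mult_right_zero)
  then have "(\<lambda>n. \<Sum>i\<le>degree p. coeff p i * (real n ^ i / x ^ n)) \<longlonglongrightarrow> 0"
    by (intro tendsto_null_sum)
  then show ?thesis
    by (simp add: poly_altdef sum_divide_distrib)
qed

lemma degree_kernel_cofactor:
  fixes x r :: real and q :: "real poly"
  assumes "\<And>t. x - t * (1 - t) ^ 3 = (r - t) * poly q t"
  shows "degree q = 3"
proof -
  have "poly [:x, -1, 3, -3, 1:] = poly ([:r, -1:] * q)"
    using assms by (intro ext) (simp add: algebra_simps power3_eq_cube)
  then have q: "[:x, -1, 3, -3, 1:] = [:r, -1:] * q"
    by (simp add: poly_eq_poly_eq_iff)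
  then have "q \<noteq> 0" by auto
  have "4 = degree ([:r, -1:] * q)" unfolding q[symmetric] by simp
  also have "\<dots> = 1 + degree q" using degree_mult_eq[of "[:r, -1:]" q] \<open>q \<noteq> 0\<close> by simp
  finally show ?thesis by simp
qed

lemma moments_sums_ln:
  fixes x r :: real and q :: "real poly"
  assumes x: "1 < \<bar>x\<bar>"
    and factor: "\<And>t. x - t * (1 - t) ^ 3 = (r - t) * poly q t"
  shows "(\<lambda>k. (\<Sum>j\<le>3. coeff q j * Beta (real (k + j) + 1) (real (3*k) + 1)) / x ^ (k + 1))
           sums ln (r / (r - 1))"
proof -
  have kernel: "0 \<le> t * (1 - t) ^ 3 \<and> t * (1 - t) ^ 3 \<le> 1" if "t \<in> {0..1}" for t :: real
    using that by (auto intro!: mult_le_one power_le_one)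
  have "r \<notin> {0..1}"
  proof
    assume "r \<in> {0..1}"
    with kernel have "\<bar>r * (1 - r) ^ 3\<bar> \<le> 1" by auto
    with x factor[of r] show False by simp
  qed
  have "(\<lambda>k. integral {0..1} (\<lambda>t. poly q t / x * (t * (1 - t) ^ 3 / x) ^ k))
          sums integral {0..1} (\<lambda>t. poly q t / x / (1 - t * (1 - t) ^ 3 / x))"
  proof (rule sums_integral_geometric)
    show "\<bar>t * (1 - t) ^ 3 / x\<bar> \<le> 1 / \<bar>x\<bar>" if "t \<in> {0..1}" for t
      using kernel[OF that] by (simp add: abs_divide divide_right_mono)
  qed (use x in \<open>auto intro!: continuous_intros\<close>)
  moreover have "integral {0..1} (\<lambda>t. poly q t / x * (t * (1 - t) ^ 3 / x) ^ k) =
      (\<Sum>j\<le>3. coeff q j * Beta (real (k + j) + 1) (real (3*k) + 1)) / x ^ (k + 1)" for k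
  proof -
    have "poly q t / x * (t * (1 - t) ^ 3 / x) ^ k = poly q t * (t ^ k * (1 - t) ^ (3*k)) / x ^ (k + 1)" for t
      by (simp add: power_divide power_mult_distrib mult_ac flip: power_mult)
    then show ?thesis
      using has_integral_poly_Beta_kernel[of q 3 k "3*k"] degree_kernel_cofactor[OF factor]
      by (simp add: integral_unique has_integral_divide)
  qed
  moreover have "integral {0..1} (\<lambda>t. poly q t / x / (1 - t * (1 - t) ^ 3 / x)) = ln (r / (r - 1))"
  proof -
    have "poly q t / x / (1 - t * (1 - t) ^ 3 / x) = 1 / (r - t)" if "t \<in> {0..1}" for t
    proof -
      have "x - t * (1 - t) ^ 3 \<noteq> 0" using kernel[OF that] x by auto
      then show ?thesis using factor[of t] x by (auto simp: field_simps)
    qed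
    then show ?thesis
      using has_integral_inverse_sub[OF \<open>r \<notin> {0..1}\<close>]
      by (metis (no_types, lifting) has_integral_cong integral_unique)
  qed
  ultimately show ?thesis by (simp only:)
qed

theorem inverse_binomial_series_sums:
  fixes x r c S :: real and P :: "real \<Rightarrow> real" and p q :: "real poly"
  assumes x: "1 < \<bar>x\<bar>"
    and factor: "\<And>t. x - t * (1 - t) ^ 3 = (r - t) * poly q t"
    \<comment> \<open>divided by \<open>x * pochhammer (4*K + 1) 4\<close>, this is the decomposition of
       \<open>summand_decomposition\<close> scaled by \<open>x ^ k / Beta K (3*K + 1)\<close>; the pochhammer
       quotients are the Beta ratios of \<open>Beta_next_ratio\<close> and \<open>Beta_moment_ratio\<close>\<close>
    and certificate: "\<And>K. x * pochhammer (4*K + 1) 4 * (P K - poly p K) =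
      c * (\<Sum>j\<le>3. coeff q j * pochhammer K (j + 1) * pochhammer (4*K + of_nat j + 2) (3 - j))
      - poly p (K + 1) * K * pochhammer (3*K + 1) 3"
    and S_eq: "S = poly p 1 / (4 * x) + c * (ln (r / (r - 1)) - (\<Sum>j\<le>3. coeff q j / (real j + 1)) / x)"
  shows "(\<lambda>n. P (real (Suc n)) / (real (Suc n) * x ^ Suc n * real ((4 * Suc n) choose Suc n))) sums S"
proof -
  define G where "G k = poly p (real k) * Beta (real k) (real (3*k) + 1) / x ^ k" for k
  define M where "M k = (\<Sum>j\<le>3. coeff q j * Beta (real (k + j) + 1) (real (3*k) + 1)) / x ^ (k + 1)" for k
  have "x \<noteq> 0" using x by auto
  have "norm (G k) \<le> norm (poly p (real k) / x ^ k)" for k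
    using abs_Beta_of_nat_le_1[of k "3*k"]
    by (simp add: G_def abs_mult abs_divide mult_left_le divide_right_mono)
  then have G_lim: "G \<longlonglongrightarrow> 0"
    using Lim_null_comparison[OF always_eventually tendsto_norm_zero[OF poly_div_power_tendsto_zero[OF x]]]
    by blast
  have "(\<lambda>n. G (Suc n) - G (Suc (Suc n))) sums G 1"
    using sums_minus[OF telescope_sums[of "\<lambda>n. G (Suc n)", OF LIMSEQ_Suc[OF G_lim]]] by simp
  moreover have "M sums ln (r / (r - 1))"
    using moments_sums_ln[OF x factor] unfolding M_def[abs_def] .
  then have "(\<lambda>n. M (Suc n)) sums (ln (r / (r - 1)) - M 0)"
    by (simp add: sums_Suc_iff)
  ultimately have "(\<lambda>n. G (Suc n) - G (Suc (Suc n)) + c * M (Suc n)) sums (G 1 + c * (ln (r / (r - 1)) - M 0))"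
    by (intro sums_add sums_mult)
  moreover have "G 1 = poly p 1 / (4 * x)"
    using Beta_of_nat_eq_inverse_binomial[of 1 3] \<open>x \<noteq> 0\<close> by (simp add: G_def field_simps)
  moreover have "M 0 = (\<Sum>j\<le>3. coeff q j / (real j + 1)) / x"
    using Beta_of_nat_eq_inverse_binomial[of "Suc j" 0 for j] by (simp add: M_def add.commute)
  moreover have "P (real (Suc n)) / (real (Suc n) * x ^ Suc n * real ((4 * Suc n) choose Suc n)) =
      G (Suc n) - G (Suc (Suc n)) + c * M (Suc n)" for n
    using summand_decomposition[of x "Suc n" P p c q, OF \<open>x \<noteq> 0\<close> _ certificate]
    by (simp add: G_def M_def)
  ultimately show ?thesis using S_eq by simp
qed

theorem lemma3p4:
  shows "((\<lambda>n. let k = real (Suc n) in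
            (5929 * k^2 - 4675 * k + 914) /
            (k * (-2) ^ Suc n * real ((4 * Suc n) choose (Suc n))))
           sums (-189 - 30 * ln 2)) \<and>
         ((\<lambda>n. let k = real (Suc n) in
            (39083 * k^2 - 31627 * k + 5624) /
            (k * (-24) ^ Suc n * real ((4 * Suc n) choose (Suc n))))
           sums (40 * ln (2/3) - 117)) \<and>
         ((\<lambda>n. let k = real (Suc n) in
            (475397 * k^2 - 335665 * k + 55072) /
            (k * (-192) ^ Suc n * real ((4 * Suc n) choose (Suc n))))
           sums (160 * ln (3/4) - 207))"
  unfolding Let_def
  \<comment> \<open>q is the cofactor of x - t(1-t)^3 at its root r; p and c solve the linear system
     that the certificate amounts to\<close>
  by (intro conjI
      inverse_binomial_series_sums[where x = "-2" and r = 2 and c = "-30"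
        and P = "\<lambda>k. 5929 * k^2 - 4675 * k + 914"
        and p = "[:914, -4864, 5632:]" and q = "[:-1, -1, 1, -1:]"]
      inverse_binomial_series_sums[where x = "-24" and r = 3 and c = "-40"
        and P = "\<lambda>k. 39083 * k^2 - 31627 * k + 5624"
        and p = "[:5624, -31744, 38912:]" and q = "[:-8, -3, 0, -1:]"]
      inverse_binomial_series_sums[where x = "-192" and r = "-3" and c = 160
        and P = "\<lambda>k. 475397 * k^2 - 335665 * k + 55072"
        and p = "[:55072, -335872, 475136:]" and q = "[:64, -21, 6, -1:]"])
    (simp_all add: eval_nat_numeral pochhammer_Suc algebra_simps ln_div)

end
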